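(* Let $n = 2k+1$ be an odd integer and $m = \binom{n}{2} = k(2k+1)$. If an edge-coloring of a complete graph contains no rainbow $n$-cycle, then it contains no rainbow $m$-cycle.
   Context: A coloring is an arbitrary (not necessarily proper) assignment of colors, from an arbitrary set, to the edges of an undirected complete graph; the graph may be finite or infinite. A rainbow $n$-cycle is a cycle through $n$ distinct vertices whose $n$ edges all receive pairwise distinct colors. *)

theory Defs
  imports Main
begin

text \<open>A coloring of the complete graph on vertex type 'a assigns a color to every
  edge, i.e. to every 2-element set of vertices; it is given as a function
  c :: 'a set => 'c (only its values on doubletons matter).\<close>

definition rainbow_cycle :: "('a set \<Rightarrow> 'c) \<Rightarrow> nat \<Rightarrow> 'a list \<Rightarrow> bool" where
  "rainbow_cycle c n vs \<longleftrightarrow>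
     n \<ge> 3 \<and> length vs = n \<and> distinct vs \<and>
     inj_on (\<lambda>i. c {vs ! i, vs ! (Suc i mod n)}) {..<n}"

definition has_rainbow_cycle :: "('a set \<Rightarrow> 'c) \<Rightarrow> nat \<Rightarrow> bool" where
  "has_rainbow_cycle c n \<longleftrightarrow> (\<exists>vs. rainbow_cycle c n vs)"

end

theory Submission
  imports Defs "HOL-Number_Theory.Cong"
begin

text \<open>Let \<open>x 0, \<dots>, x (m - 1)\<close> be a rainbow cycle with \<open>m = k (2k + 1)\<close>, indices taken
  mod \<open>m\<close>, and suppose there is no rainbow \<open>(2k + 1)\<close>-cycle. Then the chord from \<open>x a\<close> to
  \<open>x (a + 2k)\<close> repeats the colour of one of the \<open>2k\<close> cycle edges it spans, and splitting cycles
  along such chords shows that there is no rainbow \<open>(m - 2k + 2)\<close>-cycle either, as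
  \<open>m - 2k + 2 = k (2k - 1) + 2\<close>. Call the chord at \<open>a\<close> early if its colour is that of one of
  the first \<open>k\<close> spanned edges. An early chord at \<open>a\<close> and a non-early one at \<open>a + k\<close> would
  cross and yield a rainbow \<open>(m - 2k + 2)\<close>-cycle, so either all chords at multiples of \<open>k\<close> are
  early or none is. Either way their colours come from \<open>2k + 1\<close> disjoint blocks of \<open>k\<close>
  consecutive cycle edges and are distinct, and the chords at \<open>0, 2k, 4k, \<dots>\<close>, which close up
  after \<open>2k + 1\<close> steps, form a rainbow \<open>(2k + 1)\<close>-cycle.\<close>

lemma has_rainbow_cycleI:
  assumes "3 \<le> L" "inj_on v {..<L}" "inj_on e {..<L}"
    and "\<And>i. i < L \<Longrightarrow> c {v i, v (Suc i mod L)} = e i"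
  shows "has_rainbow_cycle c L"
proof -
  let ?vs = "map v [0..<L]"
  have "inj_on (\<lambda>i. c {?vs ! i, ?vs ! (Suc i mod L)}) {..<L}"
    using assms(1,3,4) by (subst inj_on_cong) auto
  moreover have "distinct ?vs"
    using assms(2) by (simp add: distinct_map atLeast0LessThan)
  ultimately have "rainbow_cycle c L ?vs"
    unfolding rainbow_cycle_def using assms(1) by simp
  then show ?thesis
    unfolding has_rainbow_cycle_def by blast
qed

locale rainbow_cycle_walk =
  fixes c :: "'a set \<Rightarrow> 'c" and m :: nat and vs :: "'a list"
  assumes rainbow: "rainbow_cycle c m vs"
begin

definition vtx :: "nat \<Rightarrow> 'a" where
  "vtx i = vs ! (i mod m)"

definition col :: "nat \<Rightarrow> 'c" where
  "col i = c {vtx i, vtx (Suc i)}"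

lemma three_le_m: "3 \<le> m"
  using rainbow by (simp add: rainbow_cycle_def)

lemma vtx_eq_iff: "vtx i = vtx j \<longleftrightarrow> [i = j] (mod m)"
  using rainbow three_le_m
  by (simp add: vtx_def rainbow_cycle_def nth_eq_iff_index_eq cong_def)

lemma col_eq_iff: "col i = col j \<longleftrightarrow> [i = j] (mod m)"
proof -
  have inj: "inj_on (\<lambda>i. c {vs ! i, vs ! (Suc i mod m)}) {..<m}"
    using rainbow by (simp add: rainbow_cycle_def)
  have "col i = c {vs ! (i mod m), vs ! (Suc (i mod m) mod m)}" for i
    unfolding col_def vtx_def by (simp add: mod_Suc_eq)
  then show ?thesis
    using inj_on_eq_iff[OF inj] three_le_m by (auto simp: cong_def)
qed

lemma vtx_add_period [simp]: "vtx (i + m) = vtx i"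
  by (simp add: vtx_def)

lemma vtx_shift_eq_iff: "s < m \<Longrightarrow> s' < m \<Longrightarrow> vtx (a + s) = vtx (a + s') \<longleftrightarrow> s = s'"
  by (auto simp: vtx_eq_iff cong_add_lcancel_nat intro: cong_less_modulus_unique_nat)

lemma col_shift_eq_iff: "s < m \<Longrightarrow> s' < m \<Longrightarrow> col (a + s) = col (a + s') \<longleftrightarrow> s = s'"
  by (auto simp: col_eq_iff cong_add_lcancel_nat intro: cong_less_modulus_unique_nat)

lemma chord_color_in_arc:
  assumes "2 \<le> d" "d < m" and no_short: "\<not> has_rainbow_cycle c (d + 1)"
  shows "\<exists>i<d. c {vtx a, vtx (a + d)} = col (a + i)"
proof (rule ccontr)
  assume chord_new: "\<not> ?thesis"
  define e where "e i = (if i = d then c {vtx a, vtx (a + d)} else col (a + i))" for i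
  have "has_rainbow_cycle c (d + 1)"
  proof (rule has_rainbow_cycleI)
    show "inj_on (\<lambda>i. vtx (a + i)) {..<d + 1}"
      using \<open>d < m\<close> by (intro inj_onI) (simp add: vtx_shift_eq_iff)
    show "inj_on e {..<d + 1}"
      using \<open>d < m\<close> chord_new
      by (intro inj_onI) (auto simp: e_def col_shift_eq_iff less_Suc_eq split: if_splits)
    show "c {vtx (a + i), vtx (a + Suc i mod (d + 1))} = e i" if "i < d + 1" for i
      using that by (cases "i = d") (auto simp: e_def col_def insert_commute)
  qed (use \<open>2 \<le> d\<close> in simp)
  with no_short show False ..
qed

lemma chord_splits_rainbow_cycle:
  assumes "2 \<le> d" "d + 2 \<le> m"
  shows "has_rainbow_cycle c (d + 1) \<or> has_rainbow_cycle c (m - d + 1)"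
proof (rule ccontr)
  assume "\<not> ?thesis"
  then have "\<exists>i<d. c {vtx 0, vtx (0 + d)} = col (0 + i)"
    and "\<exists>j<m - d. c {vtx d, vtx (d + (m - d))} = col (d + j)"
    using assms by (intro chord_color_in_arc; simp)+
  moreover have "vtx (d + (m - d)) = vtx 0"
    using assms vtx_add_period[of 0] by simp
  ultimately obtain i j where "i < d" "j < m - d" "col (0 + i) = col (0 + (d + j))"
    by (auto simp: insert_commute)
  with col_shift_eq_iff[of i "d + j" 0] show False
    by simp
qed

end

lemma no_rainbow_cycle_mult:
  assumes no_base: "\<not> has_rainbow_cycle c (D + 2)" and "1 \<le> D" "1 \<le> j"
  shows "\<not> has_rainbow_cycle c (j * D + 2)"
  using \<open>1 \<le> j\<close>
proof (induction j rule: dec_induct)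
  case base
  with no_base show ?case by simp
next
  case (step j)
  show ?case
  proof
    assume "has_rainbow_cycle c (Suc j * D + 2)"
    then obtain ws where "rainbow_cycle c (Suc j * D + 2) ws"
      unfolding has_rainbow_cycle_def by blast
    then interpret rainbow_cycle_walk c "Suc j * D + 2" ws
      by unfold_locales
    have "has_rainbow_cycle c (D + 2) \<or> has_rainbow_cycle c (j * D + 2)"
      using chord_splits_rainbow_cycle[of "D + 1"] \<open>1 \<le> D\<close> step.hyps by simp
    with no_base step.IH show False by blast
  qed
qed

lemma cong_mult_add_cancel_nat:
  fixes a b r r' k n :: nat
  assumes "r < k" "r' < k" "[a * k + r = b * k + r'] (mod n * k)"
  shows "[a = b] (mod n)"
proof -
  have "(x * k + s) mod (k * n) = k * (x mod n) + s" if "s < k" for x s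
    using that by (simp add: mod_mult2_eq)
  with assms have "k * (a mod n) + r = k * (b mod n) + r'"
    by (simp add: cong_def mult.commute)
  then have "(k * (a mod n) + r) div k = (k * (b mod n) + r') div k"
    by simp
  with assms(1,2) show ?thesis
    by (simp add: cong_def)
qed

locale rainbow_binomial_cycle = rainbow_cycle_walk c m vs
  for c :: "'a set \<Rightarrow> 'c" and m vs +
  fixes k :: nat
  assumes m_eq: "m = k * (2 * k + 1)" and two_le_k: "2 \<le> k"
begin

definition chord :: "nat \<Rightarrow> 'c" where
  "chord a = c {vtx a, vtx (a + 2 * k)}"

definition early :: "nat \<Rightarrow> bool" where
  "early a \<longleftrightarrow> (\<exists>i<k. chord a = col (a + i))"

lemma five_k_le_m: "5 * k \<le> m"
  using m_eq two_le_k by (simp add: algebra_simps)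

lemma chord_cong: "[a = b] (mod m) \<Longrightarrow> chord a = chord b"
  unfolding chord_def by (metis vtx_eq_iff cong_add_rcancel_nat)

lemma early_add_period: "early (a + t * m) \<longleftrightarrow> early a"
proof -
  have shift: "[a + t * m + i = a + i] (mod m)" for i
    by (simp add: cong_def add.commute[of _ "t * m"] add.assoc)
  have "chord (a + t * m) = chord a" "col (a + t * m + i) = col (a + i)" for i
    using chord_cong[OF shift[of 0]] shift by (auto simp: col_eq_iff)
  then show ?thesis
    unfolding early_def by simp
qed

text \<open>The cycle runs from \<open>vtx a\<close> along the first chord to \<open>vtx (a + 2k)\<close>, back along
  the walk to \<open>vtx (a + k)\<close>, along the second chord to \<open>vtx (a + 3k)\<close> and forward along
  the walk to \<open>vtx (a + m)\<close>. It skips the walk edges \<open>a, \<dots>, a + k - 1\<close> and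
  \<open>a + 2k, \<dots>, a + 3k - 1\<close>, which carry the colours of the two chords.\<close>

lemma has_rainbow_cycle_crossing_chords:
  assumes first: "chord a = col (a + i)" "i < k"
    and second: "chord (a + k) = col (a + k + j)" "k \<le> j" "j < 2 * k"
  shows "has_rainbow_cycle c (m - 2 * k + 2)"
proof -
  define L where "L = m - 2 * k + 2"
  define p where "p t = (if t = 0 then 0 else if t \<le> k + 1 then 2 * k + 1 - t else t + 2 * k - 2)"
    for t
  define q where "q t = (if t = 0 then i else if t \<le> k then 2 * k - t
    else if t = k + 1 then k + j else t + 2 * k - 2)" for t
  have L_ge: "3 * k + 2 \<le> L"
    using five_k_le_m by (simp add: L_def)
  have p_less: "p t < m" and q_less: "q t < m" if "t < L" for t
    using that five_k_le_m two_le_k first second by (auto simp: p_def q_def L_def)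
  have p_inj: "inj_on p {..<L}"
    using two_le_k by (intro inj_onI) (auto simp: p_def split: if_splits)
  have q_inj: "inj_on q {..<L}"
    using first second by (intro inj_onI) (auto simp: q_def split: if_splits)
  have edge: "c {vtx (a + p t), vtx (a + p (Suc t mod L))} = col (a + q t)" if "t < L" for t
  proof -
    consider "t = 0" | "1 \<le> t" "t \<le> k" | "t = k + 1" | "k + 2 \<le> t" "t < L - 1" | "t = L - 1"
      using \<open>t < L\<close> by linarith
    then show ?thesis
    proof cases
      case 1
      then show ?thesis
        using L_ge two_le_k first by (simp add: p_def q_def chord_def)
    next
      case 2
      then have "Suc (a + (2 * k - t)) = a + (2 * k + 1 - t)"
        by simp
      with 2 L_ge show ?thesis
        by (simp add: p_def q_def col_def insert_commute)
    next
      case 3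
      then have "Suc t mod L = k + 2"
        using L_ge two_le_k by simp
      with 3 second show ?thesis
        by (simp add: p_def q_def chord_def ac_simps)
    next
      case 4
      then have "Suc (a + (t + 2 * k - 2)) = a + (Suc t + 2 * k - 2)"
        by simp
      with 4 L_ge show ?thesis
        by (simp add: p_def q_def col_def)
    next
      case 5
      then have "p t = m - 1" "q t = m - 1" "p (Suc t mod L) = 0"
        using L_ge five_k_le_m two_le_k by (auto simp: p_def q_def L_def)
      moreover have "Suc (a + (m - 1)) = a + m"
        using three_le_m by simp
      ultimately show ?thesis
        by (simp add: col_def)
    qed
  qed
  have "has_rainbow_cycle c L"
  proof (rule has_rainbow_cycleI)
    show "inj_on (\<lambda>t. vtx (a + p t)) {..<L}"
      using p_inj p_less by (intro inj_onI) (auto simp: vtx_shift_eq_iff dest: inj_onD)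
    show "inj_on (\<lambda>t. col (a + q t)) {..<L}"
      using q_inj q_less by (intro inj_onI) (auto simp: col_shift_eq_iff dest: inj_onD)
  qed (use L_ge two_le_k edge in auto)
  then show ?thesis
    by (simp add: L_def)
qed

lemma has_rainbow_chord_cycle:
  assumes chords_distinct: "\<And>P P'. chord (P * k) = chord (P' * k) \<Longrightarrow> [P = P'] (mod 2 * k + 1)"
  shows "has_rainbow_cycle c (2 * k + 1)"
proof -
  let ?n = "2 * k + 1"
  have chord_inj: "inj_on (\<lambda>i. chord (i * (2 * k))) {..<?n}"
  proof (rule inj_onI)
    fix i j
    assume "i \<in> {..<?n}" "j \<in> {..<?n}" "chord (i * (2 * k)) = chord (j * (2 * k))"
    moreover from this have "[2 * i = 2 * j] (mod ?n)"
      using chords_distinct[of "2 * i" "2 * j"] by (simp add: ac_simps)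
    then have "[i = j] (mod ?n)"
      by (simp add: cong_mult_lcancel_nat)
    ultimately show "i = j"
      by (simp add: cong_less_modulus_unique_nat)
  qed
  have next_vtx: "vtx ((Suc i mod ?n) * (2 * k)) = vtx (i * (2 * k) + 2 * k)" if "i < ?n" for i
  proof (cases "i = 2 * k")
    case True
    then have "i * (2 * k) + 2 * k = 2 * m"
      by (simp add: m_eq algebra_simps)
    then have "[i * (2 * k) + 2 * k = 0] (mod m)"
      by (simp add: cong_def)
    with True show ?thesis
      by (simp add: vtx_eq_iff cong_sym)
  next
    case False
    with that show ?thesis
      by (simp add: algebra_simps)
  qed
  show ?thesis
  proof (rule has_rainbow_cycleI)
    show "inj_on (\<lambda>i. vtx (i * (2 * k))) {..<?n}"
    proof (rule inj_onI)
      fix i j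
      assume "i \<in> {..<?n}" "j \<in> {..<?n}" "vtx (i * (2 * k)) = vtx (j * (2 * k))"
      with chord_inj show "i = j"
        by (auto simp: vtx_eq_iff intro: chord_cong dest: inj_onD)
    qed
  qed (use two_le_k chord_inj next_vtx in \<open>auto simp: chord_def\<close>)
qed

context
  assumes no_odd: "\<not> has_rainbow_cycle c (2 * k + 1)"
begin

lemma chord_in_arc: "\<exists>i<2 * k. chord a = col (a + i)"
  unfolding chord_def using five_k_le_m two_le_k no_odd by (intro chord_color_in_arc) auto

lemma no_rainbow_long_cycle: "\<not> has_rainbow_cycle c (m - 2 * k + 2)"
proof -
  have "\<not> has_rainbow_cycle c (k * (2 * k - 1) + 2)"
    using no_odd two_le_k by (intro no_rainbow_cycle_mult) auto
  moreover have "k * (2 * k - 1) + 2 = m - 2 * k + 2"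
    using two_le_k by (cases k) (simp_all add: m_eq algebra_simps)
  ultimately show ?thesis
    by simp
qed

lemma early_add_k: "early a \<Longrightarrow> early (a + k)"
proof (rule ccontr)
  assume "early a" "\<not> early (a + k)"
  then obtain i j where "chord a = col (a + i)" "i < k"
    and "chord (a + k) = col (a + k + j)" "k \<le> j" "j < 2 * k"
    using chord_in_arc[of "a + k"] unfolding early_def by (meson not_less)
  then have "has_rainbow_cycle c (m - 2 * k + 2)"
    by (rule has_rainbow_cycle_crossing_chords)
  with no_rainbow_long_cycle show False ..
qed

lemma early_add_mult_k: "early a \<Longrightarrow> early (a + s * k)"
proof (induction s)
  case (Suc s)
  then have "early (a + s * k + k)"
    by (simp add: early_add_k)
  then show ?case
    by (simp add: algebra_simps)
qed simp

lemma early_mult_k_iff: "early (t * k) \<longleftrightarrow> early 0"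
proof
  assume "early (t * k)"
  then have "early (t * k + (2 * k * t) * k)"
    by (rule early_add_mult_k)
  moreover have "t * k + (2 * k * t) * k = 0 + t * m"
    by (simp add: m_eq algebra_simps)
  ultimately show "early 0"
    using early_add_period by metis
next
  assume "early 0"
  then show "early (t * k)"
    using early_add_mult_k[of 0 t] by simp
qed

lemma chord_block: "\<exists>h. \<forall>t. \<exists>r<k. chord (t * k) = col ((t + h) * k + r)"
proof (cases "early 0")
  case True
  then have "\<forall>t. \<exists>r<k. chord (t * k) = col ((t + 0) * k + r)"
    using early_mult_k_iff unfolding early_def by simp
  then show ?thesis ..
next
  case False
  have "\<exists>r<k. chord (t * k) = col ((t + 1) * k + r)" for t
  proof -
    obtain i where "i < 2 * k" "chord (t * k) = col (t * k + i)"
      using chord_in_arc by blast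
    moreover from this have "k \<le> i"
      using False early_mult_k_iff[of t] unfolding early_def by (meson not_less)
    ultimately have "i - k < k" "chord (t * k) = col ((t + 1) * k + (i - k))"
      by simp_all
    then show ?thesis
      by blast
  qed
  then show ?thesis
    by blast
qed

lemma chord_block_cong:
  assumes "chord (P * k) = chord (P' * k)"
  shows "[P = P'] (mod 2 * k + 1)"
proof -
  obtain h where "\<forall>t. \<exists>r<k. chord (t * k) = col ((t + h) * k + r)"
    using chord_block by blast
  then obtain r r' where "r < k" "r' < k"
    and "chord (P * k) = col ((P + h) * k + r)" "chord (P' * k) = col ((P' + h) * k + r')"
    by blast
  with assms have "col ((P + h) * k + r) = col ((P' + h) * k + r')"
    by simp
  then have "[(P + h) * k + r = (P' + h) * k + r'] (mod (2 * k + 1) * k)"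
    using col_eq_iff m_eq by (metis mult.commute)
  with \<open>r < k\<close> \<open>r' < k\<close> have "[P + h = P' + h] (mod 2 * k + 1)"
    by (rule cong_mult_add_cancel_nat)
  then show ?thesis
    by (simp add: cong_add_rcancel_nat)
qed

end

lemma has_rainbow_odd_cycle: "has_rainbow_cycle c (2 * k + 1)"
  using has_rainbow_chord_cycle chord_block_cong by blast

end

theorem lemma9:
  fixes c :: "'a set \<Rightarrow> 'c" and k n m :: nat
  assumes "n = 2 * k + 1"
    and "m = n choose 2"
    and "\<not> has_rainbow_cycle c n"
  shows "\<not> has_rainbow_cycle c m"
proof
  assume "has_rainbow_cycle c m"
  then obtain vs where vs: "rainbow_cycle c m vs"
    unfolding has_rainbow_cycle_def by blast
  have m_eq: "m = k * (2 * k + 1)"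
    using assms(1,2) by (simp add: choose_two)
  with vs have "k \<noteq> 0"
    by (cases k) (simp_all add: rainbow_cycle_def)
  then consider "k = 1" | "2 \<le> k"
    by linarith
  then show False
  proof cases
    case 1
    with assms m_eq \<open>has_rainbow_cycle c m\<close> show False
      by simp
  next
    case 2
    with vs m_eq interpret rainbow_binomial_cycle c m vs k
      by unfold_locales
    from has_rainbow_odd_cycle assms(1,3) show False
      by simp
  qed
qed

end
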